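(* For all integers $n\ge 4$, $m\ge 2$ and $k\in\{2,\ldots,n-2\}$, $$\chi_{\mu_k}(P_n\boxtimes K_m)=\begin{cases}2\lfloor\frac{n}{k+2}\rfloor & \text{if } n\equiv 0 \pmod{k+2},\\ 2\lfloor\frac{n}{k+2}\rfloor+1 & \text{if } n\equiv 1,2 \pmod{k+2},\\ 2\lfloor\frac{n}{k+2}\rfloor+2 & \text{otherwise.}\end{cases}$$
   Context: $P_n$ is the path on $n$ vertices and $K_m$ the complete graph. The strong product $G\boxtimes H$ has vertex set $V(G)\times V(H)$, with distinct $(g,h),(g',h')$ adjacent iff ($g=g'$ or $gg'\in E(G)$) and ($h=h'$ or $hh'\in E(H)$). For a positive integer $k$, a set $M\subseteq V(X)$ is a $k$-distance mutual-visibility set if for every two vertices $u,v\in M$ there exists a shortest $u,v$-path of length at most $k$ none of whose internal vertices lies in $M$. $\chi_{\mu_k}(X)$ is the minimum cardinality of a partition of $V(X)$ into $k$-distance mutual-visibility sets. *)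

theory Defs
  imports Main
begin

text \<open>A graph is given by a vertex set V and an adjacency relation E
  (assumed symmetric and irreflexive on V).\<close>

definition path_graph :: "nat \<Rightarrow> nat set \<times> (nat \<Rightarrow> nat \<Rightarrow> bool)" where
  "path_graph n = ({0..<n}, (\<lambda>i j. i + 1 = j \<or> j + 1 = i))"

definition complete_graph :: "nat \<Rightarrow> nat set \<times> (nat \<Rightarrow> nat \<Rightarrow> bool)" where
  "complete_graph m = ({0..<m}, (\<lambda>i j. i \<noteq> j))"

definition strong_product ::
  "'a set \<times> ('a \<Rightarrow> 'a \<Rightarrow> bool) \<Rightarrow> 'b set \<times> ('b \<Rightarrow> 'b \<Rightarrow> bool)
     \<Rightarrow> ('a \<times> 'b) set \<times> ('a \<times> 'b \<Rightarrow> 'a \<times> 'b \<Rightarrow> bool)" where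
  "strong_product G H =
     (fst G \<times> fst H,
      (\<lambda>(g, h) (g', h'). (g, h) \<noteq> (g', h') \<and>
          (g = g' \<or> snd G g g') \<and> (h = h' \<or> snd H h h')))"

definition is_walk :: "'a set \<times> ('a \<Rightarrow> 'a \<Rightarrow> bool) \<Rightarrow> 'a list \<Rightarrow> bool" where
  "is_walk G p \<longleftrightarrow> p \<noteq> [] \<and> set p \<subseteq> fst G \<and>
     (\<forall>i. Suc i < length p \<longrightarrow> snd G (p ! i) (p ! Suc i))"

definition walk_between :: "'a set \<times> ('a \<Rightarrow> 'a \<Rightarrow> bool) \<Rightarrow> 'a \<Rightarrow> 'a \<Rightarrow> 'a list \<Rightarrow> bool" where
  "walk_between G u v p \<longleftrightarrow> is_walk G p \<and> hd p = u \<and> last p = v"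

definition gdist :: "'a set \<times> ('a \<Rightarrow> 'a \<Rightarrow> bool) \<Rightarrow> 'a \<Rightarrow> 'a \<Rightarrow> nat" where
  "gdist G u v = (LEAST l. \<exists>p. walk_between G u v p \<and> length p = Suc l)"

definition shortest_path :: "'a set \<times> ('a \<Rightarrow> 'a \<Rightarrow> bool) \<Rightarrow> 'a \<Rightarrow> 'a \<Rightarrow> 'a list \<Rightarrow> bool" where
  "shortest_path G u v p \<longleftrightarrow> walk_between G u v p \<and> length p = Suc (gdist G u v)"

definition k_dist_mv_set :: "'a set \<times> ('a \<Rightarrow> 'a \<Rightarrow> bool) \<Rightarrow> nat \<Rightarrow> 'a set \<Rightarrow> bool" where
  "k_dist_mv_set G k M \<longleftrightarrow> M \<subseteq> fst G \<and>
     (\<forall>u\<in>M. \<forall>v\<in>M. \<exists>p. shortest_path G u v p \<and> length p - 1 \<le> k \<and>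
         (\<forall>x\<in>set (butlast (tl p)). x \<notin> M))"

definition is_partition :: "'a set \<Rightarrow> 'a set set \<Rightarrow> bool" where
  "is_partition V P \<longleftrightarrow> \<Union>P = V \<and> {} \<notin> P \<and>
     (\<forall>A\<in>P. \<forall>B\<in>P. A \<noteq> B \<longrightarrow> A \<inter> B = {})"

definition chi_mu_k :: "nat \<Rightarrow> 'a set \<times> ('a \<Rightarrow> 'a \<Rightarrow> bool) \<Rightarrow> nat" where
  "chi_mu_k k G = (LEAST c. \<exists>P. is_partition (fst G) P \<and> finite P \<and> card P = c \<and>
                      (\<forall>M\<in>P. k_dist_mv_set G k M))"

end

theory Submission
  imports Defs
begin

text \<open>Write a vertex of \<open>P\<^sub>n \<boxtimes> K\<^sub>m\<close> as a pair (column, row). A shortest path between vertices in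
  different columns visits every intermediate column exactly once, so a set \<open>M\<close> is a \<open>k\<close>-distance
  mutual-visibility set iff its columns span at most \<open>k\<close> and every column strictly between two
  of its columns has a vertex outside \<open>M\<close>.

  Lower bound: replace every class of a partition by the set of columns it meets. Scanning from
  the left, either two classes lie within the first \<open>k + 2\<close> columns, or a single class meets
  only the first two columns (if it went further, the second column would be interior to it and
  hence met by another class). Peeling these off shows that \<open>c\<close> classes cover at most
  \<open>\<lfloor>c/2\<rfloor>(k + 2)\<close> columns, plus 2 if \<open>c\<close> is odd.

  Upper bound: cut the columns into blocks of \<open>k + 2\<close>; the first column of a block together with
  row 0 of its next \<open>k\<close> columns forms one class and the rest of the block another, while a final
  block of at most two columns forms a single class.\<close>

section \<open>Walks, distances and partitions\<close>

lemma gdist_eqI: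
  assumes "walk_between G u v p" "length p = Suc d"
    and "\<And>q. walk_between G u v q \<Longrightarrow> Suc d \<le> length q"
  shows "gdist G u v = d"
  unfolding gdist_def
proof (rule Least_equality)
  show "\<exists>p. walk_between G u v p \<and> length p = Suc d" using assms by blast
qed (use assms(3) in fastforce)

lemma walk_between_endpoints:
  assumes "walk_between G u v p"
  shows "u \<in> fst G" "v \<in> fst G" "p ! 0 = u" "p ! (length p - 1) = v"
  using assms hd_in_set[of p] last_in_set[of p]
  by (auto simp: walk_between_def is_walk_def hd_conv_nth last_conv_nth)

lemma walk_between_rev:
  assumes sym: "\<And>x y. snd G x y \<Longrightarrow> snd G y x" and "walk_between G u v p"
  shows "walk_between G v u (rev p)"
proof -
  have "snd G (rev p ! i) (rev p ! Suc i)" if "Suc i < length p" for i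
  proof -
    have "snd G (p ! (length p - Suc (Suc i))) (p ! Suc (length p - Suc (Suc i)))"
      using assms(2) that unfolding walk_between_def is_walk_def by simp
    moreover have "Suc (length p - Suc (Suc i)) = length p - Suc i" using that by simp
    ultimately show ?thesis using that sym by (simp add: rev_nth)
  qed
  then show ?thesis using assms(2) by (auto simp: walk_between_def is_walk_def hd_rev last_rev)
qed

lemma gdist_sym:
  assumes "\<And>x y. snd G x y \<Longrightarrow> snd G y x"
  shows "gdist G u v = gdist G v u"
proof -
  have "(\<exists>p. walk_between G u v p \<and> length p = Suc l) \<longleftrightarrow> (\<exists>p. walk_between G v u p \<and> length p = Suc l)" for l
    using walk_between_rev[OF assms] by (metis length_rev)
  then show ?thesis unfolding gdist_def by simp
qed

lemma shortest_path_rev: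
  assumes "\<And>x y. snd G x y \<Longrightarrow> snd G y x" "shortest_path G u v p"
  shows "shortest_path G v u (rev p)"
  using assms walk_between_rev[OF assms(1)] gdist_sym[OF assms(1)]
  by (simp add: shortest_path_def)

lemma butlast_tl_rev: "butlast (tl (rev xs)) = rev (butlast (tl xs))"
  by (metis butlast_rev butlast_tl rev_rev_ident)

lemma gdist_refl:
  assumes "u \<in> fst G"
  shows "walk_between G u u [u]" "gdist G u u = 0"
proof -
  show w: "walk_between G u u [u]" using assms by (simp add: walk_between_def is_walk_def)
  show "gdist G u u = 0"
    by (rule gdist_eqI[OF w]) (auto simp: walk_between_def is_walk_def Suc_le_eq)
qed

lemma gdist_adjacent:
  assumes "u \<in> fst G" "v \<in> fst G" "snd G u v" "u \<noteq> v"
  shows "walk_between G u v [u, v]" "gdist G u v = 1"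
proof -
  show w: "walk_between G u v [u, v]"
    using assms by (simp add: walk_between_def is_walk_def nth_Cons split: nat.split)
  show "gdist G u v = 1"
  proof (rule gdist_eqI[OF w])
    fix q assume q: "walk_between G u v q"
    then have "q \<noteq> []" "hd q = u" "last q = v" by (auto simp: walk_between_def is_walk_def)
    with \<open>u \<noteq> v\<close> show "Suc 1 \<le> length q" by (cases q) (auto simp: Suc_le_eq split: if_split_asm)
  qed simp
qed

lemma is_partition_fibres:
  "is_partition V ((\<lambda>l. {v\<in>V. f v = l}) ` f ` V)"
  unfolding is_partition_def by auto

lemma chi_mu_k_eqI:
  assumes "is_partition (fst G) P" "finite P" "card P \<le> c" "\<forall>M\<in>P. k_dist_mv_set G k M"
    and "\<And>P. is_partition (fst G) P \<Longrightarrow> finite P \<Longrightarrow> \<forall>M\<in>P. k_dist_mv_set G k M \<Longrightarrow> c \<le> card P"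
  shows "chi_mu_k k G = c"
  unfolding chi_mu_k_def
proof (rule Least_equality)
  show "\<exists>P. is_partition (fst G) P \<and> finite P \<and> card P = c \<and> (\<forall>M\<in>P. k_dist_mv_set G k M)"
    using assms by (intro exI[of _ P]) (simp add: le_antisym)
qed (use assms(5) in blast)

section \<open>Shortest paths in the strong product of a path and a clique\<close>

definition PK :: "nat \<Rightarrow> nat \<Rightarrow> (nat \<times> nat) set \<times> (nat \<times> nat \<Rightarrow> nat \<times> nat \<Rightarrow> bool)" where
  "PK n m = strong_product (path_graph n) (complete_graph m)"

lemma PK_vertices: "fst (PK n m) = {0..<n} \<times> {0..<m}"
  by (simp add: PK_def strong_product_def path_graph_def complete_graph_def)

lemma PK_adj:
  "snd (PK n m) u v \<longleftrightarrow> u \<noteq> v \<and> (fst u = fst v \<or> fst u + 1 = fst v \<or> fst v + 1 = fst u)"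
  by (cases u; cases v) (auto simp: PK_def strong_product_def path_graph_def complete_graph_def)

lemma PK_sym: "snd (PK n m) u v \<Longrightarrow> snd (PK n m) v u"
  by (auto simp: PK_adj)

lemma walk_fst_diff:
  assumes "is_walk (PK n m) p" "i \<le> j" "j < length p"
  shows "fst (p ! j) \<le> fst (p ! i) + (j - i) \<and> fst (p ! i) \<le> fst (p ! j) + (j - i)"
  using assms(2,3)
proof (induction j rule: dec_induct)
  case (step j)
  then have "snd (PK n m) (p ! j) (p ! Suc j)"
    using assms(1) unfolding is_walk_def by simp
  with step show ?case unfolding PK_adj by auto
qed simp

lemma walk_between_fst_diff:
  assumes "walk_between (PK n m) u v p"
  shows "fst v \<le> fst u + (length p - 1)" "fst u \<le> fst v + (length p - 1)"
proof -
  have "p \<noteq> []" "p ! 0 = u" "p ! (length p - 1) = v"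
    using assms by (auto simp: walk_between_def is_walk_def hd_conv_nth last_conv_nth)
  then show "fst v \<le> fst u + (length p - 1)" "fst u \<le> fst v + (length p - 1)"
    using walk_fst_diff[of n m p 0 "length p - 1"] assms by (auto simp: walk_between_def)
qed

definition column_walk :: "(nat \<Rightarrow> nat) \<Rightarrow> nat \<Rightarrow> nat \<Rightarrow> (nat \<times> nat) list" where
  "column_walk \<rho> a b = map (\<lambda>x. (x, \<rho> x)) [a..<Suc b]"

lemma column_walk_PK:
  assumes "a \<le> b" "b < n" "\<And>x. a \<le> x \<Longrightarrow> x \<le> b \<Longrightarrow> \<rho> x < m"
  shows "walk_between (PK n m) (a, \<rho> a) (b, \<rho> b) (column_walk \<rho> a b)"
    and "length (column_walk \<rho> a b) = Suc (b - a)"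
    and "set (butlast (tl (column_walk \<rho> a b))) = (\<lambda>x. (x, \<rho> x)) ` {a<..<b}"
proof -
  show len: "length (column_walk \<rho> a b) = Suc (b - a)"
    using assms(1) by (simp add: column_walk_def)
  have nth: "column_walk \<rho> a b ! i = (a + i, \<rho> (a + i))" if "i < Suc (b - a)" for i
  proof -
    have "i < length [a..<Suc b]" "a + i < Suc b" using that assms(1) by auto
    then show ?thesis unfolding column_walk_def by (simp only: nth_map nth_upt)
  qed
  have "is_walk (PK n m) (column_walk \<rho> a b)"
    unfolding is_walk_def
  proof (intro conjI allI impI)
    show "set (column_walk \<rho> a b) \<subseteq> fst (PK n m)"
      using assms by (auto simp: column_walk_def PK_vertices)
    fix i assume "Suc i < length (column_walk \<rho> a b)"
    then show "snd (PK n m) (column_walk \<rho> a b ! i) (column_walk \<rho> a b ! Suc i)"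
      by (simp add: len nth PK_adj)
  qed (use len in auto)
  then show "walk_between (PK n m) (a, \<rho> a) (b, \<rho> b) (column_walk \<rho> a b)"
    using assms(1) by (simp add: walk_between_def column_walk_def hd_map last_map del: upt_Suc)
  have "butlast (tl [a..<Suc b]) = [Suc a..<b]" by (simp only: tl_upt) simp
  then show "set (butlast (tl (column_walk \<rho> a b))) = (\<lambda>x. (x, \<rho> x)) ` {a<..<b}"
    by (simp add: column_walk_def map_butlast[symmetric] map_tl[symmetric] atLeastSucLessThan_greaterThanLessThan)
qed

lemma column_walk_between:
  assumes "u \<in> fst (PK n m)" "v \<in> fst (PK n m)" "fst u < fst v"
    and "\<And>x. fst u < x \<Longrightarrow> x < fst v \<Longrightarrow> \<rho> x < m"
  defines "p \<equiv> column_walk (\<rho>(fst u := snd u, fst v := snd v)) (fst u) (fst v)"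
  shows "walk_between (PK n m) u v p" "length p = Suc (fst v - fst u)"
    "set (butlast (tl p)) = (\<lambda>x. (x, \<rho> x)) ` {fst u<..<fst v}"
proof -
  let ?\<rho> = "\<rho>(fst u := snd u, fst v := snd v)"
  have rows: "?\<rho> x < m" if "fst u \<le> x" "x \<le> fst v" for x
    using assms(1-4) that by (auto simp: PK_vertices le_less)
  note walk = column_walk_PK[of "fst u" "fst v" n ?\<rho> m, folded p_def]
  show "walk_between (PK n m) u v p" "length p = Suc (fst v - fst u)"
    using walk rows assms(2,3) by (auto simp: PK_vertices)
  have "(\<lambda>x. (x, ?\<rho> x)) ` {fst u<..<fst v} = (\<lambda>x. (x, \<rho> x)) ` {fst u<..<fst v}"
    by (rule image_cong) auto
  then show "set (butlast (tl p)) = (\<lambda>x. (x, \<rho> x)) ` {fst u<..<fst v}"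
    using walk rows assms(2,3) by (auto simp: PK_vertices)
qed

lemma gdist_PK:
  assumes "u \<in> fst (PK n m)" "v \<in> fst (PK n m)" "fst u < fst v"
  shows "gdist (PK n m) u v = fst v - fst u"
proof -
  have "0 < m" using assms(1) by (auto simp: PK_vertices)
  then obtain p where "walk_between (PK n m) u v p" "length p = Suc (fst v - fst u)"
    using column_walk_between[OF assms, of "\<lambda>_. 0"] by blast
  then show ?thesis
  proof (rule gdist_eqI)
    fix q assume "walk_between (PK n m) u v q"
    with walk_between_fst_diff[OF this] show "Suc (fst v - fst u) \<le> length q"
      by (cases q) (auto simp: walk_between_def is_walk_def)
  qed
qed

lemma shortest_path_PK_fst_nth:
  assumes "shortest_path (PK n m) u v p" "fst u < fst v" "i < length p"
  shows "fst (p ! i) = fst u + i"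
proof -
  have walk: "walk_between (PK n m) u v p" "is_walk (PK n m) p"
    using assms(1) by (auto simp: shortest_path_def walk_between_def)
  note ends = walk_between_endpoints[OF walk(1)]
  have "length p = Suc (fst v - fst u)"
    using assms(1,2) gdist_PK[OF ends(1,2)] by (simp add: shortest_path_def)
  moreover have "fst (p ! i) \<le> fst u + i"
    using walk_fst_diff[OF walk(2), of 0 i] ends(3) assms(3) by simp
  moreover have "fst v \<le> fst (p ! i) + (length p - 1 - i)"
    using walk_fst_diff[OF walk(2), of i "length p - 1"] ends(4) assms(3) by simp
  ultimately show ?thesis using assms(2,3) by linarith
qed

section \<open>Distance mutual-visibility sets\<close>

lemma k_dist_mv_set_PK_span:
  assumes "k_dist_mv_set (PK n m) k M" "u \<in> M" "v \<in> M"
  shows "fst v \<le> fst u + k"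
proof -
  obtain p where "shortest_path (PK n m) u v p" "length p - 1 \<le> k"
    using assms unfolding k_dist_mv_set_def by blast
  then show ?thesis using walk_between_fst_diff(1)[of n m u v p] by (auto simp: shortest_path_def)
qed

lemma k_dist_mv_set_PK_gap:
  assumes "k_dist_mv_set (PK n m) k M" "u \<in> M" "v \<in> M" "fst u < x" "x < fst v"
  shows "\<exists>j<m. (x, j) \<notin> M"
proof -
  obtain p where sp: "shortest_path (PK n m) u v p" and avoid: "\<forall>y\<in>set (butlast (tl p)). y \<notin> M"
    using assms(1-3) unfolding k_dist_mv_set_def by blast
  have walk: "walk_between (PK n m) u v p" "is_walk (PK n m) p"
    using sp by (auto simp: shortest_path_def walk_between_def)
  define i where "i = x - fst u"
  have "p \<noteq> []" using walk(2) by (simp add: is_walk_def)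
  then have "fst v = fst u + (length p - 1)"
    using shortest_path_PK_fst_nth[OF sp assms(4)[THEN less_trans, OF assms(5)], of "length p - 1"]
      walk_between_endpoints(4)[OF walk(1)] by simp
  then have i: "0 < i" "i < length p - 1" using assms(4,5) by (auto simp: i_def)
  have "p ! i \<in> set (butlast (tl p))"
    using i nth_mem[of "i - 1" "butlast (tl p)"] by (simp add: nth_butlast nth_tl)
  moreover have "p ! i \<in> fst (PK n m)"
    using walk(2) i by (auto simp: is_walk_def)
  moreover have "fst (p ! i) = x"
    using shortest_path_PK_fst_nth[OF sp, of i] i assms(4,5) by (simp add: i_def)
  ultimately show ?thesis using avoid by (cases "p ! i") (auto simp: PK_vertices)
qed

lemma PK_visible_pair:
  assumes "M \<subseteq> fst (PK n m)" "0 < k"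
    and span: "\<And>u v. u \<in> M \<Longrightarrow> v \<in> M \<Longrightarrow> fst v \<le> fst u + k"
    and gap: "\<And>u v x. u \<in> M \<Longrightarrow> v \<in> M \<Longrightarrow> fst u < x \<Longrightarrow> x < fst v \<Longrightarrow> \<exists>j<m. (x, j) \<notin> M"
    and "u \<in> M" "v \<in> M" "fst u \<le> fst v"
  shows "\<exists>p. shortest_path (PK n m) u v p \<and> length p - 1 \<le> k \<and> (\<forall>x\<in>set (butlast (tl p)). x \<notin> M)"
proof -
  have uv: "u \<in> fst (PK n m)" "v \<in> fst (PK n m)" using assms by auto
  consider "u = v" | "u \<noteq> v" "fst u = fst v" | "fst u < fst v"
    using \<open>fst u \<le> fst v\<close> by linarith
  then show ?thesis
  proof cases
    case 1
    with gdist_refl[OF uv(1)] show ?thesis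
      by (intro exI[of _ "[u]"]) (simp add: shortest_path_def)
  next
    case 2
    then have "snd (PK n m) u v" by (simp add: PK_adj)
    with gdist_adjacent[OF uv this \<open>u \<noteq> v\<close>] \<open>0 < k\<close> show ?thesis
      by (intro exI[of _ "[u, v]"]) (simp add: shortest_path_def)
  next
    case 3
    define \<rho> where "\<rho> x = (SOME j. j < m \<and> (x, j) \<notin> M)" for x
    have \<rho>: "\<rho> x < m \<and> (x, \<rho> x) \<notin> M" if "fst u < x" "x < fst v" for x
      unfolding \<rho>_def by (rule someI_ex) (use gap[OF \<open>u \<in> M\<close> \<open>v \<in> M\<close> that] in auto)
    then have "\<And>x. fst u < x \<Longrightarrow> x < fst v \<Longrightarrow> \<rho> x < m" by blast
    then obtain p where walk: "walk_between (PK n m) u v p" "length p = Suc (fst v - fst u)"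
        "set (butlast (tl p)) = (\<lambda>x. (x, \<rho> x)) ` {fst u<..<fst v}"
      using column_walk_between[OF uv 3] by blast
    show ?thesis
    proof (intro exI conjI)
      show "shortest_path (PK n m) u v p"
        using walk(1,2) gdist_PK[OF uv 3] by (simp add: shortest_path_def)
      show "length p - 1 \<le> k" using walk(2) span[OF \<open>u \<in> M\<close> \<open>v \<in> M\<close>] by simp
      show "\<forall>x\<in>set (butlast (tl p)). x \<notin> M" using walk(3) \<rho> by auto
    qed
  qed
qed

lemma k_dist_mv_set_PKI:
  assumes "0 < k" and V: "M \<subseteq> fst (PK n m)"
    and span: "\<And>u v. u \<in> M \<Longrightarrow> v \<in> M \<Longrightarrow> fst v \<le> fst u + k"
    and gap: "\<And>u v x. u \<in> M \<Longrightarrow> v \<in> M \<Longrightarrow> fst u < x \<Longrightarrow> x < fst v \<Longrightarrow> \<exists>j<m. (x, j) \<notin> M"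
  shows "k_dist_mv_set (PK n m) k M"
  unfolding k_dist_mv_set_def
proof (intro conjI ballI V)
  have pair: "\<exists>p. shortest_path (PK n m) u v p \<and> length p - 1 \<le> k \<and>
      (\<forall>x\<in>set (butlast (tl p)). x \<notin> M)" if "u \<in> M" "v \<in> M" "fst u \<le> fst v" for u v
    using span gap that by (rule PK_visible_pair[OF V assms(1)])
  fix u v assume uv: "u \<in> M" "v \<in> M"
  show "\<exists>p. shortest_path (PK n m) u v p \<and> length p - 1 \<le> k \<and> (\<forall>x\<in>set (butlast (tl p)). x \<notin> M)"
  proof (cases "fst u \<le> fst v")
    case True
    then show ?thesis using pair uv by blast
  next
    case False
    then obtain p where "shortest_path (PK n m) v u p" "length p - 1 \<le> k"
        "\<forall>x\<in>set (butlast (tl p)). x \<notin> M"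
      using pair[of v u] uv by force
    then show ?thesis
      using shortest_path_rev[OF PK_sym] by (intro exI[of _ "rev p"]) (simp add: butlast_tl_rev)
  qed
qed

section \<open>Lower bound: column covers\<close>

text \<open>The largest number of consecutive columns that \<open>c\<close> classes can cover.\<close>

definition cover_capacity :: "nat \<Rightarrow> nat \<Rightarrow> nat" where
  "cover_capacity k c = c div 2 * (k + 2) + (if odd c then 2 else 0)"

lemma cover_capacity_Suc_Suc: "cover_capacity k (Suc (Suc c)) = cover_capacity k c + (k + 2)"
  by (simp add: cover_capacity_def)

lemma cover_capacity_Suc:
  assumes "2 \<le> k"
  shows "cover_capacity k c + 2 \<le> cover_capacity k (Suc c)"
  using assms by (cases "even c") (auto simp: cover_capacity_def elim!: evenE oddE)

lemma cover_capacity_mono: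
  assumes "2 \<le> k" "a \<le> b"
  shows "cover_capacity k a \<le> cover_capacity k b"
  using lift_Suc_mono_le[of "cover_capacity k", OF _ assms(2)] cover_capacity_Suc[OF assms(1)]
  by (meson add_leD1)

text \<open>Abstraction of a partition into \<open>k\<close>-distance mutual-visibility sets: \<open>C M\<close> is the set of
  columns met by the class \<open>M\<close>; an interior column of \<open>M\<close> has a vertex outside \<open>M\<close> and is
  therefore met by another class.\<close>

definition column_cover :: "nat \<Rightarrow> nat \<Rightarrow> nat \<Rightarrow> 'i set \<Rightarrow> ('i \<Rightarrow> nat set) \<Rightarrow> bool" where
  "column_cover k s n P C \<longleftrightarrow> finite P \<and>
     (\<forall>M\<in>P. \<forall>a\<in>C M. \<forall>b\<in>C M. b \<le> a + k) \<and>
     (\<forall>x. s \<le> x \<and> x < n \<longrightarrow> (\<exists>M\<in>P. x \<in> C M)) \<and>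
     (\<forall>M\<in>P. \<forall>a\<in>C M. \<forall>b\<in>C M. \<forall>x\<in>C M. a < x \<and> x < b \<longrightarrow> (\<exists>M'\<in>P. M' \<noteq> M \<and> x \<in> C M'))"

lemma column_coverI:
  assumes "finite P"
    and "\<And>M a b. M \<in> P \<Longrightarrow> a \<in> C M \<Longrightarrow> b \<in> C M \<Longrightarrow> b \<le> a + k"
    and "\<And>x. s \<le> x \<Longrightarrow> x < n \<Longrightarrow> \<exists>M\<in>P. x \<in> C M"
    and "\<And>M a b x. M \<in> P \<Longrightarrow> a \<in> C M \<Longrightarrow> b \<in> C M \<Longrightarrow> x \<in> C M \<Longrightarrow> a < x \<Longrightarrow> x < b \<Longrightarrow>
      \<exists>M'\<in>P. M' \<noteq> M \<and> x \<in> C M'"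
  shows "column_cover k s n P C"
  using assms unfolding column_cover_def by blast

lemma column_coverD:
  assumes "column_cover k s n P C"
  shows "finite P"
    and "M \<in> P \<Longrightarrow> a \<in> C M \<Longrightarrow> b \<in> C M \<Longrightarrow> b \<le> a + k"
    and "s \<le> x \<Longrightarrow> x < n \<Longrightarrow> \<exists>M\<in>P. x \<in> C M"
    and "M \<in> P \<Longrightarrow> a \<in> C M \<Longrightarrow> b \<in> C M \<Longrightarrow> x \<in> C M \<Longrightarrow> a < x \<Longrightarrow> x < b \<Longrightarrow>
      \<exists>M'\<in>P. M' \<noteq> M \<and> x \<in> C M'"
  using assms unfolding column_cover_def by blast+

lemma column_cover_restrict:
  assumes cov: "column_cover k s n P C" and "s \<le> t" and X: "\<forall>M\<in>X. \<forall>x\<in>C M. x < t"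
  shows "column_cover k t n (P - X) (\<lambda>M. C M \<inter> {t..})"
proof (rule column_coverI)
  show "finite (P - X)" using column_coverD(1)[OF cov] by simp
next
  fix M a b assume "M \<in> P - X" "a \<in> C M \<inter> {t..}" "b \<in> C M \<inter> {t..}"
  then show "b \<le> a + k" using column_coverD(2)[OF cov] by blast
next
  fix x assume "t \<le> x" "x < n"
  then obtain M where "M \<in> P" "x \<in> C M" using column_coverD(3)[OF cov, of x] \<open>s \<le> t\<close> by auto
  then show "\<exists>M\<in>P - X. x \<in> C M \<inter> {t..}" using X \<open>t \<le> x\<close> by force
next
  fix M a b x assume "M \<in> P - X" "a \<in> C M \<inter> {t..}" "b \<in> C M \<inter> {t..}" "x \<in> C M \<inter> {t..}"
    "a < x" "x < b"
  then obtain M' where "M' \<in> P" "M' \<noteq> M" "x \<in> C M'" using column_coverD(4)[OF cov] by blast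
  then show "\<exists>M'\<in>P - X. M' \<noteq> M \<and> x \<in> C M' \<inter> {t..}"
    using X \<open>x \<in> C M \<inter> {t..}\<close> by force
qed

lemma column_cover_peel:
  assumes cov: "column_cover k s n P C" and "Suc s < n"
  obtains (two) A B where "A \<in> P" "B \<in> P" "A \<noteq> B"
      "\<forall>x\<in>C A. x < s + k + 2" "\<forall>x\<in>C B. x < s + k + 2"
    | (one) A where "A \<in> P" "\<forall>x\<in>C A. x < s + 2"
proof -
  have window: "\<forall>x\<in>C M. x < s + k + 2" if "M \<in> P" "y \<in> C M" "y \<le> Suc s" for M y
    using column_coverD(2)[OF cov that(1,2)] that(3) by fastforce
  obtain A where A: "A \<in> P" "s \<in> C A"
    using column_coverD(3)[OF cov, of s] assms(2) by auto
  obtain B where B: "B \<in> P" "Suc s \<in> C B"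
    using column_coverD(3)[OF cov, of "Suc s"] assms(2) by auto
  consider "A \<noteq> B" | "A = B" "\<forall>x\<in>C A. x < s + 2" | y where "A = B" "y \<in> C A" "Suc s < y"
    by fastforce
  then show thesis
  proof cases
    case 1
    then show thesis using two[OF A(1) B(1)] window A B by auto
  next
    case 2
    then show thesis using one A by blast
  next
    case 3
    then obtain M' where "M' \<in> P" "M' \<noteq> A" "Suc s \<in> C M'"
      using column_coverD(4)[OF cov A(1,2) \<open>y \<in> C A\<close>, of "Suc s"] B by auto
    then show thesis using two[OF A(1) \<open>M' \<in> P\<close>] window A by auto
  qed
qed

lemma column_cover_length_le:
  assumes "column_cover k s n P C" "2 \<le> k"
  shows "n - s \<le> cover_capacity k (card P)"
  using assms(1)
proof (induction "card P" arbitrary: P C s rule: less_induct)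
  case less
  have fin: "finite P" using column_coverD(1)[OF less.prems] .
  consider "n \<le> s" | "n = Suc s" | "Suc s < n" by linarith
  then show ?case
  proof cases
    case 2
    then obtain M where "M \<in> P" using column_coverD(3)[OF less.prems, of s] by auto
    then obtain c where "card P = Suc c" using fin by (metis card_Suc_Diff1)
    then show ?thesis using 2 cover_capacity_Suc[OF assms(2), of c] by simp
  next
    case 3
    from less.prems this show ?thesis
    proof (cases rule: column_cover_peel)
      case (two A B)
      let ?t = "s + k + 2"
      have "column_cover k ?t n (P - {A, B}) (\<lambda>M. C M \<inter> {?t..})"
        using column_cover_restrict[OF less.prems, of ?t "{A, B}"] two by auto
      moreover have card: "card P = Suc (Suc (card (P - {A, B})))"
      proof -
        have "card (P - {A, B}) = card P - 2" "2 \<le> card P"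
          using two fin card_mono[of P "{A, B}"] by (simp_all add: card_Diff_subset)
        then show ?thesis by linarith
      qed
      ultimately have "n - ?t \<le> cover_capacity k (card (P - {A, B}))"
        using less.hyps by simp
      then show ?thesis unfolding card cover_capacity_Suc_Suc by linarith
    next
      case (one A)
      let ?t = "s + 2"
      have "column_cover k ?t n (P - {A}) (\<lambda>M. C M \<inter> {?t..})"
        using column_cover_restrict[OF less.prems, of ?t "{A}"] one by auto
      moreover have card: "card P = Suc (card (P - {A}))"
        using one fin by (metis card_Suc_Diff1)
      ultimately have "n - ?t \<le> cover_capacity k (card (P - {A}))"
        using less.hyps by simp
      then show ?thesis using cover_capacity_Suc[OF assms(2), of "card (P - {A})"]
        unfolding card by linarith
    qed
  qed simp
qed

definition chi_formula :: "nat \<Rightarrow> nat \<Rightarrow> nat" where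
  "chi_formula k n = (if n mod (k + 2) = 0 then 2 * (n div (k + 2))
     else if n mod (k + 2) \<in> {1, 2} then 2 * (n div (k + 2)) + 1
     else 2 * (n div (k + 2)) + 2)"

lemma chi_formula_div_mod:
  assumes "q = n div (k + 2)" "r = n mod (k + 2)"
  shows "chi_formula k n = (if r = 0 then 2 * q else if r \<in> {1, 2} then 2 * q + 1 else 2 * q + 2)"
  using assms by (simp add: chi_formula_def)

lemma cover_capacity_chi_formula_less:
  assumes "0 < k" "0 < n"
  shows "cover_capacity k (chi_formula k n - 1) < n"
proof -
  define q r where "q = n div (k + 2)" and "r = n mod (k + 2)"
  note F = chi_formula_div_mod[OF q_def r_def]
  have n: "n = q * (k + 2) + r" unfolding q_def r_def by (rule div_mult_mod_eq[symmetric])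
  have capacity_odd: "cover_capacity k (Suc (2 * p)) = p * (k + 2) + 2" for p
    by (simp add: cover_capacity_def)
  consider "r = 0" | "r \<in> {1, 2}" | "r \<notin> {0, 1, 2}" by blast
  then show ?thesis
  proof cases
    case 1
    then obtain q' where q': "q = Suc q'" using n assms(2) by (cases q) auto
    then have "chi_formula k n - 1 = Suc (2 * q')" using F 1 by simp
    then show ?thesis using capacity_odd n 1 q' assms(1) by simp
  next
    case 2
    then have "chi_formula k n - 1 = 2 * q" using F by auto
    then show ?thesis using n 2 by (auto simp: cover_capacity_def)
  next
    case 3
    then have "chi_formula k n - 1 = Suc (2 * q)" using F by auto
    then show ?thesis using capacity_odd n 3 by auto
  qed
qed

lemma PK_partition_column_cover:
  assumes "0 < m" "is_partition (fst (PK n m)) P" "finite P"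
    and mv: "\<forall>M\<in>P. k_dist_mv_set (PK n m) k M"
  shows "column_cover k 0 n P (\<lambda>M. fst ` M)"
proof (rule column_coverI)
  have V: "\<Union>P = {0..<n} \<times> {0..<m}" using assms(2) by (simp add: is_partition_def PK_vertices)
  show "finite P" by fact
  show "b \<le> a + k" if M: "M \<in> P" and ab: "a \<in> fst ` M" "b \<in> fst ` M" for M a b
  proof -
    obtain u v where "u \<in> M" "v \<in> M" "a = fst u" "b = fst v" using ab by blast
    then show ?thesis using k_dist_mv_set_PK_span mv M by blast
  qed
  show "\<exists>M\<in>P. x \<in> fst ` M" if "0 \<le> x" "x < n" for x
  proof -
    have "(x, 0) \<in> \<Union>P" using V that assms(1) by simp
    then show ?thesis by force
  qed
  show "\<exists>M'\<in>P. M' \<noteq> M \<and> x \<in> fst ` M'"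
    if M: "M \<in> P" and abx: "a \<in> fst ` M" "b \<in> fst ` M" "x \<in> fst ` M" "a < x" "x < b"
    for M a b x
  proof -
    obtain u v where "u \<in> M" "v \<in> M" "a = fst u" "b = fst v" using abx(1,2) by blast
    then obtain j where j: "j < m" "(x, j) \<notin> M"
      using k_dist_mv_set_PK_gap mv M abx(4,5) by blast
    obtain w where w: "w \<in> M" "x = fst w" using abx(3) by blast
    then have "w \<in> {0..<n} \<times> {0..<m}" using M V by blast
    then have "x < n" using w(2) by auto
    then have "(x, j) \<in> \<Union>P" using V j by simp
    then obtain M' where "M' \<in> P" "(x, j) \<in> M'" by blast
    with j show ?thesis by (intro bexI[of _ M']) force+
  qed
qed

lemma PK_partition_card_ge:
  assumes "0 < m" "2 \<le> k" "0 < n" "is_partition (fst (PK n m)) P" "finite P"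
    and "\<forall>M\<in>P. k_dist_mv_set (PK n m) k M"
  shows "chi_formula k n \<le> card P"
proof (rule ccontr)
  assume "\<not> chi_formula k n \<le> card P"
  then have "cover_capacity k (card P) \<le> cover_capacity k (chi_formula k n - 1)"
    by (intro cover_capacity_mono[OF assms(2)]) simp
  moreover have "n \<le> cover_capacity k (card P)"
    using column_cover_length_le[OF PK_partition_column_cover assms(2)] assms(1,4-6) by simp
  moreover have "cover_capacity k (chi_formula k n - 1) < n"
    using cover_capacity_chi_formula_less assms(2,3) by simp
  ultimately show False by linarith
qed

section \<open>Upper bound: the block colouring\<close>

text \<open>\<open>t\<close> is the block of column \<open>x\<close> and \<open>d\<close> its offset in the block; the first branch is
  the final block when it has at most two columns.\<close>

definition block_label :: "nat \<Rightarrow> nat \<Rightarrow> nat \<Rightarrow> nat \<Rightarrow> nat" where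
  "block_label k n x j = (let K = k + 2; t = x div K; d = x mod K in
     if t = n div K \<and> n mod K \<le> 2 then 2 * t
     else 2 * t + (if d = 0 \<or> (j = 0 \<and> d \<le> k) then 0 else 1))"

lemma block_label_div2: "block_label k n x j div 2 = x div (k + 2)"
  by (simp add: block_label_def Let_def)

lemma block_label_less_chi_formula:
  assumes "x < n"
  shows "block_label k n x j < chi_formula k n"
proof -
  define q r t where "q = n div (k + 2)" and "r = n mod (k + 2)" and "t = x div (k + 2)"
  have "t \<le> q" using assms unfolding q_def t_def by (simp add: div_le_mono)
  have "block_label k n x j \<le> 2 * t + 1" using block_label_div2[of k n x j] unfolding t_def by linarith
  moreover have "block_label k n x j = 2 * t" if "t = q" "r \<le> 2"
    using that unfolding block_label_def Let_def q_def r_def t_def by simp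
  moreover have "0 < r" if "t = q"
    using assms that div_mult_mod_eq[of x "k + 2"] div_mult_mod_eq[of n "k + 2"]
    unfolding q_def r_def t_def by (metis add.right_neutral le_add1 not_gr_zero not_less)
  ultimately show ?thesis using \<open>t \<le> q\<close> chi_formula_div_mod[OF q_def r_def]
    by (cases "t = q") auto
qed

lemma block_label_span:
  assumes "0 < k" "x1 < x2" "x2 < n" and same: "block_label k n x1 j1 = block_label k n x2 j2"
  shows "x2 \<le> x1 + k"
proof -
  define K where "K = k + 2"
  define t d1 d2 where "t = x1 div K" and "d1 = x1 mod K" and "d2 = x2 mod K"
  have "x2 div K = t" using block_label_div2[of k n] same unfolding t_def K_def by metis
  then have x: "x1 = t * K + d1" "x2 = t * K + d2" "d2 < K"
    unfolding t_def d1_def d2_def K_def by (metis div_mult_mod_eq, metis div_mult_mod_eq, simp)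
  then have "d1 < d2" using assms(2) by simp
  show ?thesis
  proof (cases "t = n div K \<and> n mod K \<le> 2")
    case True
    then have "n = t * K + n mod K" by simp
    then have "d2 < 2" using True x assms(3) by linarith
    then show ?thesis using x \<open>d1 < d2\<close> assms(1) by linarith
  next
    case False
    then have "(d1 = 0 \<or> (j1 = 0 \<and> d1 \<le> k)) \<longleftrightarrow> (d2 = 0 \<or> (j2 = 0 \<and> d2 \<le> k))"
      using same \<open>x2 div K = t\<close> unfolding block_label_def Let_def K_def[symmetric]
        t_def[symmetric] d1_def[symmetric] d2_def[symmetric] by (auto split: if_splits)
    then show ?thesis using x \<open>d1 < d2\<close> unfolding K_def by linarith
  qed
qed

lemma block_label_interior:
  assumes "x1 < x" "x < x2" "x2 < n" "x1 div (k + 2) = x2 div (k + 2)"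
  shows "block_label k n x 0 \<noteq> block_label k n x 1"
proof -
  define K where "K = k + 2"
  define t d d2 where "t = x1 div K" and "d = x mod K" and "d2 = x2 mod K"
  have "x div K = t" "x2 div K = t"
    using assms div_le_mono[of x1 x K] div_le_mono[of x x2 K] unfolding t_def K_def by auto
  then have x: "x1 \<ge> t * K" "x = t * K + d" "x2 = t * K + d2" "d2 < K"
    unfolding t_def d_def d2_def K_def
    by (metis div_times_less_eq_dividend, metis div_mult_mod_eq, metis div_mult_mod_eq, simp)
  then have "0 < d" "d < d2" using assms(1,2) by linarith+
  moreover have "\<not> (t = n div K \<and> n mod K \<le> 2)"
  proof
    assume short: "t = n div K \<and> n mod K \<le> 2"
    then have "n = t * K + n mod K" by simp
    then show False using short x \<open>0 < d\<close> \<open>d < d2\<close> assms(3) by linarith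
  qed
  ultimately show ?thesis
    using \<open>x div K = t\<close> x(4) unfolding block_label_def Let_def K_def[symmetric] d_def[symmetric]
    by (auto simp: K_def)
qed

lemma PK_block_label_partition:
  assumes "2 \<le> m" "0 < k"
  shows "\<exists>P. is_partition (fst (PK n m)) P \<and> finite P \<and> card P \<le> chi_formula k n \<and>
    (\<forall>M\<in>P. k_dist_mv_set (PK n m) k M)"
proof -
  define f where "f v = block_label k n (fst v) (snd v)" for v :: "nat \<times> nat"
  define P where "P = (\<lambda>l. {v \<in> fst (PK n m). f v = l}) ` f ` fst (PK n m)"
  have fin: "finite (fst (PK n m))" by (simp add: PK_vertices)
  have "card P \<le> card (f ` fst (PK n m))" unfolding P_def using fin by (simp add: card_image_le)
  also have "\<dots> \<le> card {..<chi_formula k n}"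
    by (rule card_mono) (auto simp: f_def PK_vertices intro: block_label_less_chi_formula)
  finally have "card P \<le> chi_formula k n" by simp
  moreover have "k_dist_mv_set (PK n m) k M" if M_in: "M \<in> P" for M
  proof -
    obtain l where M: "M = {v \<in> fst (PK n m). f v = l}" using M_in unfolding P_def by blast
    have same: "fst v < n \<and> block_label k n (fst u) (snd u) = block_label k n (fst v) (snd v)"
      if "u \<in> M" "v \<in> M" for u v
      using M that by (auto simp: f_def PK_vertices)
    show ?thesis
    proof (rule k_dist_mv_set_PKI[OF assms(2)])
      show "M \<subseteq> fst (PK n m)" using M by blast
    next
      fix u v assume "u \<in> M" "v \<in> M"
      with same have uv: "fst v < n" "block_label k n (fst u) (snd u) = block_label k n (fst v) (snd v)"
        by blast+
      show "fst v \<le> fst u + k"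
        using block_label_span[OF assms(2) _ uv] by (cases "fst u < fst v") auto
    next
      fix u v x assume "u \<in> M" "v \<in> M" and x: "fst u < x" "x < fst v"
      with same have uv: "fst v < n" "block_label k n (fst u) (snd u) = block_label k n (fst v) (snd v)"
        by blast+
      have "fst u div (k + 2) = fst v div (k + 2)" using block_label_div2 uv(2) by metis
      then have "block_label k n x 0 \<noteq> block_label k n x 1"
        using block_label_interior x uv(1) by blast
      then have "(x, 0) \<notin> M \<or> (x, 1) \<notin> M" using M unfolding f_def by auto
      moreover have "0 < m" "1 < m" using assms(1) by simp_all
      ultimately show "\<exists>j<m. (x, j) \<notin> M" by blast
    qed
  qed
  moreover have "is_partition (fst (PK n m)) P" unfolding P_def by (rule is_partition_fibres)
  moreover have "finite P" unfolding P_def using fin by simp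
  ultimately show ?thesis by blast
qed

theorem proposition5p1:
  fixes n m k :: nat
  assumes "n \<ge> 4" and "m \<ge> 2" and "2 \<le> k" and "k \<le> n - 2"
  shows "chi_mu_k k (strong_product (path_graph n) (complete_graph m)) =
    (if n mod (k + 2) = 0 then 2 * (n div (k + 2))
     else if n mod (k + 2) \<in> {1, 2} then 2 * (n div (k + 2)) + 1
     else 2 * (n div (k + 2)) + 2)"
proof -
  \<comment> \<open>The formula holds for every \<open>n > 0\<close>.\<close>
  have "0 < n" "0 < m" "0 < k" using assms by auto
  obtain P where "is_partition (fst (PK n m)) P" "finite P" "card P \<le> chi_formula k n"
      "\<forall>M\<in>P. k_dist_mv_set (PK n m) k M"
    using PK_block_label_partition[OF assms(2) \<open>0 < k\<close>] by blast
  then have "chi_mu_k k (PK n m) = chi_formula k n"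
    by (rule chi_mu_k_eqI) (rule PK_partition_card_ge[OF \<open>0 < m\<close> assms(3) \<open>0 < n\<close>])
  then show ?thesis by (simp add: PK_def chi_formula_def)
qed

end
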